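(* Let $f:\mathbb{R}^D\to\mathbb{R}$ be differentiable, bounded below by $f_{\mathrm{inf}}>-\infty$, and $L$-smooth. Fix $\beta_1,\beta_2\in[0,1)$, $\epsilon>0$, a deterministic $\theta_0\in\mathbb{R}^D$, and constants $0<a_1\le a_2$. For $T\ge1$, run the ADOPT algorithm with constant learning rate $\alpha_t=\alpha$ where $a_1/\sqrt{T}\le\alpha\le a_2/\sqrt{T}$ (i.e. $\alpha=\Theta(1/\sqrt T)$): $v_0=g_0\odot g_0$, $m_1=g_1/\max\{\sqrt{v_0},\epsilon\}$, and for $t=1,\dots,T$: $$\theta_t=\theta_{t-1}-\alpha_t m_t,\quad v_t=\beta_2 v_{t-1}+(1-\beta_2)g_t\odot g_t,\quad m_{t+1}=\beta_1 m_t+(1-\beta_1)\frac{g_{t+1}}{\max\{\sqrt{v_t},\epsilon\}}.$$ Here $g_0$ is a random vector with $\mathbb{E}\|g_0\|^2\le G^2$, and for $t\ge1$, $g_t$ is a random stochastic gradient with $\mathbb{E}[g_t\mid g_0,\dots,g_{t-1}]=\nabla f(\theta_{t-1})$ and $\mathbb{E}\|g_t\|^2\le G^2$, for a constant $G>0$. Then $$\min_{t=1,\dots,T}\Big\{\mathbb{E}\big[\|\nabla f(\theta_{t-1})\|^{4/3}\big]^{3/2}\Big\}=\mathcal{O}(1/\sqrt{T}),$$ i.e. there is a constant $K$ independent of $T$ (possibly depending on $f(\theta_0)-f_{\mathrm{inf}},L,G,\epsilon,D,\beta_1,\beta_2,a_1,a_2$) such that the left-hand side is at most $K/\sqrt{T}$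 for every $T\ge1$.
   Context: $L$-smooth means $\|\nabla f(x)-\nabla f(y)\|\le L\|x-y\|$ for all $x,y$, with $L>0$. Norms are Euclidean; $\odot$, square root, division and $\max\{\cdot,\epsilon\}$ act elementwise. *)

theory Defs
  imports "HOL-Analysis.Analysis" "HOL-Probability.Probability"
begin

text \<open>ADOPT iterates, computed pointwise from a sequence of gradient vectors g.
  adopt_state alpha b1 b2 eps theta0 g t = (theta_t, v_t, m_(t+1)).\<close>

fun adopt_state :: "real \<Rightarrow> real \<Rightarrow> real \<Rightarrow> real \<Rightarrow> real^'D \<Rightarrow> (nat \<Rightarrow> real^'D) \<Rightarrow> nat
     \<Rightarrow> (real^'D) \<times> (real^'D) \<times> (real^'D)" where
  "adopt_state \<alpha> \<beta>1 \<beta>2 \<epsilon> \<theta>0 g 0 =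
     (let v0 = (\<chi> i. g 0 $ i * g 0 $ i)
      in (\<theta>0, v0, (\<chi> i. g 1 $ i / max (sqrt (v0 $ i)) \<epsilon>)))"
| "adopt_state \<alpha> \<beta>1 \<beta>2 \<epsilon> \<theta>0 g (Suc t) =
     (let (\<theta>, v, m) = adopt_state \<alpha> \<beta>1 \<beta>2 \<epsilon> \<theta>0 g t;
          \<theta>' = \<theta> - \<alpha> *\<^sub>R m;
          v' = (\<chi> i. \<beta>2 * v $ i + (1 - \<beta>2) * (g (Suc t) $ i * g (Suc t) $ i));
          m' = (\<chi> i. \<beta>1 * m $ i + (1 - \<beta>1) * (g (Suc (Suc t)) $ i / max (sqrt (v' $ i)) \<epsilon>))
      in (\<theta>', v', m'))"

definition adopt_theta :: "real \<Rightarrow> real \<Rightarrow> real \<Rightarrow> real \<Rightarrow> real^'D \<Rightarrow> (nat \<Rightarrow> real^'D) \<Rightarrow> nat \<Rightarrow> real^'D" where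
  "adopt_theta \<alpha> \<beta>1 \<beta>2 \<epsilon> \<theta>0 g t = fst (adopt_state \<alpha> \<beta>1 \<beta>2 \<epsilon> \<theta>0 g t)"

definition gen_sigma :: "'m measure \<Rightarrow> (nat \<Rightarrow> 'm \<Rightarrow> real^'D) \<Rightarrow> nat \<Rightarrow> 'm measure" where
  "gen_sigma M g t = sigma (space M) (\<Union>i<t. {g i -` A \<inter> space M | A. A \<in> sets borel})"

end

theory Submission
  imports Defs
begin

text \<open>Write \<open>x\<^sub>s\<^sub>+\<^sub>1 = g\<^sub>s\<^sub>+\<^sub>1 / max {\<surd>v\<^sub>s, \<epsilon>}\<close> for the scaled stochastic gradient and
  \<open>c = \<beta>\<^sub>1 / (1 - \<beta>\<^sub>1)\<close>. The shadow iterate \<open>z\<^sub>s = \<theta>\<^sub>s - c \<alpha> m\<^sub>s\<close> satisfies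
  \<open>z\<^sub>s\<^sub>+\<^sub>1 = z\<^sub>s - \<alpha> x\<^sub>s\<^sub>+\<^sub>1\<close>, so the descent lemma along \<open>z\<close>, with \<open>L\<close>-smoothness to pass
  from \<open>\<nabla>f(z\<^sub>s)\<close> to \<open>\<nabla>f(\<theta>\<^sub>s)\<close>, telescopes to
  \<open>\<alpha> \<Sum>\<^sub>s\<^sub><\<^sub>T \<nabla>f(\<theta>\<^sub>s)\<cdot>x\<^sub>s\<^sub>+\<^sub>1 \<le> f(\<theta>\<^sub>0) - f\<^sub>i\<^sub>n\<^sub>f + O(\<alpha> + \<alpha>\<^sup>2 T)\<close>, the error terms being second
  moments of \<open>x\<close> and \<open>m\<close>, which are at most \<open>G\<^sup>2/\<epsilon>\<^sup>2\<close>. Since \<open>v\<^sub>s\<close> depends only on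
  \<open>g\<^sub>0, \<dots>, g\<^sub>s\<close>, taking conditional expectations turns \<open>\<nabla>f(\<theta>\<^sub>s)\<cdot>x\<^sub>s\<^sub>+\<^sub>1\<close> into
  \<open>Q\<^sub>s = \<Sum>\<^sub>i \<nabla>\<^sub>if(\<theta>\<^sub>s)\<^sup>2 / max {\<surd>v\<^sub>s\<^sub>,\<^sub>i, \<epsilon>}\<close>, and \<open>\<alpha> \<approx> 1/\<surd>T\<close> gives
  \<open>min\<^sub>s E Q\<^sub>s = O(1/\<surd>T)\<close>. Finally \<open>\<parallel>\<nabla>f(\<theta>\<^sub>s)\<parallel>\<^sup>2 \<le> Q\<^sub>s \<surd>(\<epsilon>\<^sup>2 + \<Sum>\<^sub>i v\<^sub>s\<^sub>,\<^sub>i)\<close> with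
  \<open>E \<Sum>\<^sub>i v\<^sub>s\<^sub>,\<^sub>i \<le> G\<^sup>2\<close>, and a Young-type split
  \<open>E \<parallel>\<nabla>f(\<theta>\<^sub>s)\<parallel>\<^bsup>4/3\<^esup> \<le> E Q\<^sub>s / \<sigma> + \<sigma>\<^sup>2 (\<epsilon>\<^sup>2 + G\<^sup>2)\<close> with \<open>\<sigma> = T\<^bsup>-1/6\<^esup>\<close> yields the rate.\<close>

lemma descent_lemma:
  fixes f :: "'a::real_inner \<Rightarrow> real"
  assumes grad: "\<And>x. GDERIV f x :> df x"
    and smooth: "\<And>x y. norm (df x - df y) \<le> L * norm (x - y)" and L: "0 \<le> L"
  shows "f y \<le> f x + df x \<bullet> (y - x) + L * (norm (y - x))\<^sup>2"
proof -
  define d where "d = y - x"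
  have deriv: "((\<lambda>t. f (x + t *\<^sub>R d)) has_real_derivative (df (x + t *\<^sub>R d) \<bullet> d)) (at t)" for t
  proof -
    have "((\<lambda>t. x + t *\<^sub>R d) has_derivative (\<lambda>h. h *\<^sub>R d)) (at t)"
      by (auto intro!: derivative_eq_intros)
    moreover have "(f has_derivative (\<lambda>h. h \<bullet> df (x + t *\<^sub>R d))) (at (x + t *\<^sub>R d))"
      using grad unfolding gderiv_def by blast
    ultimately have "((\<lambda>t. f (x + t *\<^sub>R d)) has_derivative (\<lambda>h. (h *\<^sub>R d) \<bullet> df (x + t *\<^sub>R d))) (at t)"
      by (rule has_derivative_compose)
    moreover have "(\<lambda>h. (h *\<^sub>R d) \<bullet> df (x + t *\<^sub>R d)) = (*) (df (x + t *\<^sub>R d) \<bullet> d)"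
      by (auto simp: inner_commute)
    ultimately show ?thesis
      unfolding has_field_derivative_def by simp
  qed
  obtain z where z: "0 < z" "z < 1" "f y - f x = df (x + z *\<^sub>R d) \<bullet> d"
    using MVT2[of 0 1 "\<lambda>t. f (x + t *\<^sub>R d)", OF _ deriv] by (auto simp: d_def)
  have "(df (x + z *\<^sub>R d) - df x) \<bullet> d \<le> norm (df (x + z *\<^sub>R d) - df x) * norm d"
    by (rule norm_cauchy_schwarz)
  also have "\<dots> \<le> L * (z * norm d) * norm d"
    using smooth[of "x + z *\<^sub>R d" x] z by (simp add: mult_right_mono)
  also have "\<dots> \<le> L * (norm d)\<^sup>2"
  proof -
    have "z * (norm d * norm d) \<le> norm d * norm d"
      using z by (simp add: mult_left_le_one_le)
    then show ?thesis
      using L by (simp add: power2_eq_square mult.assoc mult_left_mono)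
  qed
  finally show ?thesis
    using z(3) by (simp add: d_def inner_diff_left)
qed

lemma norm_convex_combination_sq_le:
  fixes u w :: "'a::real_normed_vector"
  assumes "0 \<le> b" "b \<le> 1"
  shows "(norm (b *\<^sub>R u + (1 - b) *\<^sub>R w))\<^sup>2 \<le> b * (norm u)\<^sup>2 + (1 - b) * (norm w)\<^sup>2"
proof -
  have "norm (b *\<^sub>R u + (1 - b) *\<^sub>R w) \<le> b * norm u + (1 - b) * norm w"
    using norm_triangle_ineq[of "b *\<^sub>R u" "(1 - b) *\<^sub>R w"] assms by simp
  then have "(norm (b *\<^sub>R u + (1 - b) *\<^sub>R w))\<^sup>2 \<le> (b * norm u + (1 - b) * norm w)\<^sup>2"
    by (simp add: power_mono)
  also have "\<dots> = b * (norm u)\<^sup>2 + (1 - b) * (norm w)\<^sup>2 - b * (1 - b) * (norm u - norm w)\<^sup>2"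
    by (simp add: power2_eq_square algebra_simps)
  also have "\<dots> \<le> b * (norm u)\<^sup>2 + (1 - b) * (norm w)\<^sup>2"
    using assms by simp
  finally show ?thesis .
qed

lemma norm_sq_vec: "(norm (x :: real^'n))\<^sup>2 = (\<Sum>i\<in>UNIV. (x $ i)\<^sup>2)"
  unfolding power2_norm_eq_inner inner_vec_def by (simp add: power2_eq_square)

lemma norm_sq_le_preconditioned:
  fixes a w :: "real^'n"
  assumes eps: "0 < \<epsilon>" and w: "\<And>i. 0 \<le> w $ i"
  shows "(norm a)\<^sup>2 \<le> (\<Sum>i\<in>UNIV. (a $ i)\<^sup>2 / max (sqrt (w $ i)) \<epsilon>) * sqrt (\<epsilon>\<^sup>2 + (\<Sum>i\<in>UNIV. w $ i))"
proof -
  define D where "D = sqrt (\<epsilon>\<^sup>2 + (\<Sum>i\<in>UNIV. w $ i))"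
  have sum_w: "0 \<le> (\<Sum>i\<in>UNIV. w $ i)"
    using w by (simp add: sum_nonneg)
  have w_le_sum: "w $ i \<le> (\<Sum>i\<in>UNIV. w $ i)" for i
    using w by (intro member_le_sum) auto
  have "sqrt (w $ i) \<le> D" for i
    using w_le_sum[of i] zero_le_power2[of \<epsilon>] unfolding D_def by (intro real_sqrt_le_mono) linarith
  moreover have "sqrt (\<epsilon>\<^sup>2) \<le> D"
    using sum_w unfolding D_def by (intro real_sqrt_le_mono) simp
  ultimately have denominator: "max (sqrt (w $ i)) \<epsilon> \<le> D" for i
    using eps by simp
  have D_pos: "0 < D"
    using eps sum_w by (simp add: D_def add_pos_nonneg)
  have "(norm a)\<^sup>2 / D = (\<Sum>i\<in>UNIV. (a $ i)\<^sup>2 / D)"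
    by (simp add: norm_sq_vec sum_divide_distrib)
  also have "\<dots> \<le> (\<Sum>i\<in>UNIV. (a $ i)\<^sup>2 / max (sqrt (w $ i)) \<epsilon>)"
    using denominator eps D_pos by (intro sum_mono divide_left_mono) (auto intro!: mult_pos_pos)
  finally show ?thesis
    using D_pos unfolding D_def[symmetric] by (simp add: field_simps)
qed

lemma powr_four_thirds_le:
  fixes y Q d s :: real
  assumes "0 \<le> y" "0 \<le> Q" "0 \<le> d" "0 < s" and y: "y\<^sup>2 \<le> Q * d"
  shows "y powr (4/3) \<le> Q / s + s\<^sup>2 * d\<^sup>2"
proof (cases "y = 0")
  case True
  then show ?thesis using assms by simp
next
  case False
  define w where "w = y powr (2/3)"
  have w_pos: "0 < w"
    using False assms by (simp add: w_def)
  have w_cube: "w ^ 3 = y\<^sup>2"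
  proof -
    have "w ^ 3 = w powr (real 3)"
      using w_pos by (simp add: powr_realpow)
    also have "\<dots> = y powr (real 2)"
      unfolding w_def powr_powr by simp
    finally show ?thesis
      using False assms by (simp add: powr_realpow)
  qed
  have w_sq: "w\<^sup>2 = y powr (4/3)"
  proof -
    have "w\<^sup>2 = w powr (real 2)"
      using w_pos by (simp add: powr_realpow)
    then show ?thesis
      unfolding w_def powr_powr by simp
  qed
  show ?thesis
  proof (cases "w \<le> s * d")
    case True
    then have "w\<^sup>2 \<le> (s * d)\<^sup>2"
      using w_pos by (intro power_mono) auto
    then show ?thesis
      using w_sq assms by (simp add: power_mult_distrib add_increasing)
  next
    case False
    have "s * w ^ 3 \<le> s * (Q * d)"
      using w_cube y assms(4) by simp
    also have "\<dots> \<le> Q * w"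
      using False assms(2) mult_left_mono[of "s * d" w Q] by (simp add: algebra_simps)
    finally have "s * w ^ 3 \<le> Q * w" .
    then have "w\<^sup>2 \<le> Q / s"
      using w_pos assms by (simp add: power3_eq_cube power2_eq_square field_simps)
    then show ?thesis
      using w_sq by (simp add: add_increasing2)
  qed
qed

lemma powr_three_halves_rate:
  fixes y q C P :: real and T :: nat
  assumes T: "1 \<le> T" and "0 \<le> y" "0 \<le> C" "0 \<le> P" and q: "q \<le> C / sqrt T"
    and tradeoff: "\<And>\<sigma>. 0 < \<sigma> \<Longrightarrow> y \<le> q / \<sigma> + \<sigma>\<^sup>2 * P"
  shows "y powr (3/2) \<le> (C + P) powr (3/2) / sqrt T"
proof -
  define \<rho> where "\<rho> = real T powr (1/6)"
  have \<rho>_pos: "0 < \<rho>"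
    using T by (simp add: \<rho>_def)
  have "\<rho> ^ 3 = \<rho> powr (real 3)"
    using \<rho>_pos by (simp add: powr_realpow)
  also have "\<dots> = real T powr (1/2)"
    unfolding \<rho>_def powr_powr by simp
  finally have \<rho>_cube: "\<rho> ^ 3 = sqrt T"
    by (simp add: powr_half_sqrt)
  have "q * \<rho> ^ 3 \<le> C"
    using q \<rho>_pos unfolding \<rho>_cube[symmetric] by (simp add: pos_le_divide_eq)
  then have "q * \<rho> \<le> C / \<rho>\<^sup>2"
    using \<rho>_pos by (simp add: pos_le_divide_eq power2_eq_square power3_eq_cube mult.assoc)
  moreover have "y \<le> q * \<rho> + P / \<rho>\<^sup>2"
    using tradeoff[of "1 / \<rho>"] \<rho>_pos by (simp add: power_divide)
  ultimately have "y \<le> (C + P) / \<rho>\<^sup>2"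
    by (simp add: add_divide_distrib)
  have "(\<rho>\<^sup>2) powr (3/2) = (\<rho> powr 2) powr (3/2)"
    using \<rho>_pos by (simp add: powr_realpow)
  also have "\<dots> = \<rho> powr (real 3)"
    unfolding powr_powr by simp
  also have "\<dots> = sqrt T"
    using \<rho>_pos \<rho>_cube by (simp add: powr_realpow)
  finally have \<rho>_sq_powr: "(\<rho>\<^sup>2) powr (3/2) = sqrt T" .
  have "y powr (3/2) \<le> ((C + P) / \<rho>\<^sup>2) powr (3/2)"
    using \<open>y \<le> (C + P) / \<rho>\<^sup>2\<close> assms by (intro powr_mono2) auto
  also have "\<dots> = (C + P) powr (3/2) / sqrt T"
    using assms \<rho>_sq_powr by (simp add: powr_divide)
  finally show ?thesis .
qed

lemma sum_le_sqrt_of_step_size: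
  fixes S \<Delta> A1 A2 A3 a1 a2 \<alpha> :: real and T :: nat
  assumes T: "1 \<le> T" and a1: "0 < a1" "a1 / sqrt T \<le> \<alpha>" and a2: "\<alpha> \<le> a2 / sqrt T"
    and nonneg: "0 \<le> \<Delta>" "0 \<le> A1" "0 \<le> A2" "0 \<le> A3"
    and S: "\<alpha> * S \<le> \<Delta> + A1 * \<alpha> + A2 * \<alpha>\<^sup>2 + A3 * \<alpha>\<^sup>2 * T"
  shows "S \<le> (\<Delta> / a1 + A1 + A2 * a2 + A3 * a2) * sqrt T"
proof -
  define r where "r = sqrt T"
  have r: "1 \<le> r" "r\<^sup>2 = T"
    using T by (simp_all add: r_def)
  have \<alpha>r: "a1 \<le> \<alpha> * r" "\<alpha> * r \<le> a2"
    using a1 a2 r by (simp_all add: r_def field_simps)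
  have "0 < \<alpha> * r"
    using \<alpha>r a1 by linarith
  then have \<alpha>: "0 < \<alpha>"
    using r by (simp add: zero_less_mult_iff)
  have "\<alpha> \<le> \<alpha> * r"
    using \<alpha> r by simp
  have "\<Delta> * a1 \<le> \<Delta> * (\<alpha> * r)"
    using \<alpha>r(1) nonneg(1) by (rule mult_left_mono)
  then have "\<Delta> \<le> \<alpha> * r * (\<Delta> / a1)"
    using a1 by (simp add: field_simps)
  moreover have "A1 * \<alpha> \<le> \<alpha> * r * A1"
    using mult_left_mono[OF r(1), of "A1 * \<alpha>"] \<alpha> nonneg by (simp add: mult_ac)
  moreover have "A2 * \<alpha>\<^sup>2 \<le> \<alpha> * r * (A2 * a2)"
  proof -
    have "\<alpha> \<le> a2"
      using \<open>\<alpha> \<le> \<alpha> * r\<close> \<alpha>r(2) by linarith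
    then have "\<alpha> * \<alpha> \<le> (\<alpha> * r) * a2"
      using \<open>\<alpha> \<le> \<alpha> * r\<close> \<alpha> by (intro mult_mono) auto
    from mult_left_mono[OF this nonneg(3)] show ?thesis
      by (simp add: power2_eq_square mult_ac)
  qed
  moreover have "A3 * \<alpha>\<^sup>2 * T \<le> \<alpha> * r * (A3 * a2)"
  proof -
    have "(\<alpha> * r) * (\<alpha> * r) \<le> (\<alpha> * r) * a2"
      using \<alpha>r \<alpha> r by (intro mult_left_mono) auto
    from mult_left_mono[OF this nonneg(4)] show ?thesis
      unfolding r(2)[symmetric] by (simp add: power2_eq_square mult_ac)
  qed
  moreover have "\<alpha> * (r * (\<Delta> / a1 + A1 + A2 * a2 + A3 * a2))
      = \<alpha> * r * (\<Delta> / a1) + \<alpha> * r * A1 + \<alpha> * r * (A2 * a2) + \<alpha> * r * (A3 * a2)"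
    by (simp add: algebra_simps)
  ultimately have "\<alpha> * S \<le> \<alpha> * (r * (\<Delta> / a1 + A1 + A2 * a2 + A3 * a2))"
    using S by linarith
  then show ?thesis
    using \<alpha> by (simp add: r_def mult.commute)
qed

lemma abs_component_div_max_le:
  fixes a :: "real^'n"
  assumes "0 < \<epsilon>"
  shows "\<bar>a $ i / max b \<epsilon>\<bar> \<le> norm a / \<epsilon>"
proof -
  have "\<bar>a $ i / max b \<epsilon>\<bar> = \<bar>a $ i\<bar> / max b \<epsilon>"
    using assms by (simp add: abs_divide)
  also have "\<dots> \<le> \<bar>a $ i\<bar> / \<epsilon>"
    using assms by (intro divide_left_mono) auto
  also have "\<dots> \<le> norm a / \<epsilon>"
    using assms component_le_norm_cart by (intro divide_right_mono) auto
  finally show ?thesis .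
qed

lemma mult_le_sum_squares:
  fixes x y :: real
  assumes "0 \<le> x" "0 \<le> y"
  shows "x * y \<le> x\<^sup>2 + y\<^sup>2"
  using sum_squares_bound[of x y] mult_nonneg_nonneg[OF assms] by linarith

lemma abs_div_max_mult_le:
  fixes a b :: "real^'n"
  assumes "0 < \<epsilon>"
  shows "\<bar>a $ i / max c \<epsilon> * b $ i\<bar> \<le> (norm a / \<epsilon>)\<^sup>2 + (norm b)\<^sup>2"
proof -
  have "\<bar>a $ i / max c \<epsilon> * b $ i\<bar> \<le> norm a / \<epsilon> * norm b"
    unfolding abs_mult using assms abs_component_div_max_le component_le_norm_cart
    by (intro mult_mono) auto
  also have "\<dots> \<le> (norm a / \<epsilon>)\<^sup>2 + (norm b)\<^sup>2"
    using assms by (intro mult_le_sum_squares) simp_all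
  finally show ?thesis .
qed

lemma abs_div_max_mult_self_le:
  fixes a :: "real^'n"
  assumes "0 < \<epsilon>"
  shows "\<bar>a $ i / max c \<epsilon> * a $ i\<bar> \<le> (norm a)\<^sup>2 / \<epsilon>"
proof -
  have "\<bar>a $ i / max c \<epsilon> * a $ i\<bar> \<le> norm a / \<epsilon> * norm a"
    unfolding abs_mult using assms abs_component_div_max_le component_le_norm_cart
    by (intro mult_mono) auto
  then show ?thesis
    by (simp add: power2_eq_square)
qed

section \<open>Measurability and integrability\<close>

lemma borel_measurable_vec_nth [measurable (raw)]:
  fixes x :: "'a \<Rightarrow> real^'n"
  shows "x \<in> borel_measurable M \<Longrightarrow> (\<lambda>\<omega>. x \<omega> $ i) \<in> borel_measurable M"
  unfolding cart_eq_inner_axis by (intro borel_measurable_inner measurable_const) auto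

lemma borel_measurable_vec_lambda:
  assumes "\<And>i. (\<lambda>\<omega>. F \<omega> i) \<in> borel_measurable M"
  shows "(\<lambda>\<omega>. (\<chi> i. F \<omega> i) :: real^'n) \<in> borel_measurable M"
  unfolding borel_measurable_euclidean_space[where 'c="real^'n"]
proof
  fix b :: "real^'n"
  assume "b \<in> Basis"
  then obtain j where b: "b = axis j 1"
    by (auto simp: Basis_vec_def)
  show "(\<lambda>\<omega>. (\<chi> i. F \<omega> i) \<bullet> b) \<in> borel_measurable M"
    unfolding b inner_axis using assms[of j] by simp
qed

lemma integrable_abs_bounded:
  fixes u h :: "'a \<Rightarrow> real"
  assumes "integrable M h" "u \<in> borel_measurable M" "\<And>x. \<bar>u x\<bar> \<le> h x"
  shows "integrable M u"
  by (rule Bochner_Integration.integrable_bound[OF assms(1,2)]) (auto intro: order_trans[OF assms(3) abs_ge_self])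

lemma integrable_norm_sq_add:
  fixes u w :: "'a \<Rightarrow> 'b::{banach, second_countable_topology}"
  assumes u: "integrable M (\<lambda>x. (norm (u x))\<^sup>2)" and w: "integrable M (\<lambda>x. (norm (w x))\<^sup>2)"
    and [measurable]: "(\<lambda>x. u x + w x) \<in> borel_measurable M"
  shows "integrable M (\<lambda>x. (norm (u x + w x))\<^sup>2)"
proof (rule integrable_abs_bounded)
  show "integrable M (\<lambda>x. 2 * (norm (u x))\<^sup>2 + 2 * (norm (w x))\<^sup>2)"
    using u w by simp
  show "(\<lambda>x. (norm (u x + w x))\<^sup>2) \<in> borel_measurable M"
    by measurable
  fix x
  have "(norm (u x + w x))\<^sup>2 \<le> (norm (u x) + norm (w x))\<^sup>2"
    by (simp add: power_mono norm_triangle_ineq)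
  also have "\<dots> \<le> 2 * (norm (u x))\<^sup>2 + 2 * (norm (w x))\<^sup>2"
    using zero_le_power2[of "norm (u x) - norm (w x)"] by (simp add: power2_eq_square algebra_simps)
  finally show "\<bar>(norm (u x + w x))\<^sup>2\<bar> \<le> 2 * (norm (u x))\<^sup>2 + 2 * (norm (w x))\<^sup>2"
    by simp
qed

lemma integral_mult_real_cond_exp_eq:
  assumes "sigma_finite_subalgebra M F"
    and "integrable M (\<lambda>\<omega>. h \<omega> * X \<omega>)"
    and [measurable]: "h \<in> borel_measurable F" "X \<in> borel_measurable M" "Y \<in> borel_measurable M"
    and cond_exp: "AE \<omega> in M. real_cond_exp M F X \<omega> = Y \<omega>"
  shows "(\<integral>\<omega>. h \<omega> * X \<omega> \<partial>M) = (\<integral>\<omega>. h \<omega> * Y \<omega> \<partial>M)"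
proof -
  interpret sigma_finite_subalgebra M F
    by fact
  have [measurable]: "h \<in> borel_measurable M"
    by (rule measurable_from_subalg[OF subalg]) fact
  have "(\<integral>\<omega>. h \<omega> * X \<omega> \<partial>M) = (\<integral>\<omega>. h \<omega> * real_cond_exp M F X \<omega> \<partial>M)"
    using real_cond_exp_intg(2)[OF assms(2-4)] by simp
  also have "\<dots> = (\<integral>\<omega>. h \<omega> * Y \<omega> \<partial>M)"
  proof (rule integral_cong_AE)
    show "(\<lambda>\<omega>. h \<omega> * real_cond_exp M F X \<omega>) \<in> borel_measurable M"
      by measurable
    show "AE \<omega> in M. h \<omega> * real_cond_exp M F X \<omega> = h \<omega> * Y \<omega>"
      using cond_exp by eventually_elim simp
  qed measurable
  finally show ?thesis .
qed

lemma space_gen_sigma [simp]: "space (gen_sigma M g t) = space M"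
  and sets_gen_sigma:
    "sets (gen_sigma M g t) = sigma_sets (space M) (\<Union>i<t. {g i -` A \<inter> space M | A. A \<in> sets borel})"
  unfolding gen_sigma_def by (auto intro!: space_measure_of sets_measure_of)

lemma subalgebra_gen_sigma:
  assumes "\<And>j. j < t \<Longrightarrow> g j \<in> borel_measurable M"
  shows "subalgebra M (gen_sigma M g t)"
  unfolding subalgebra_def sets_gen_sigma
  using assms by (auto intro!: sets.sigma_sets_subset measurable_sets)

lemma measurable_gen_sigma:
  fixes g :: "nat \<Rightarrow> 'a \<Rightarrow> real^'n"
  assumes "j < t"
  shows "g j \<in> borel_measurable (gen_sigma M g t)"
proof (rule measurableI)
  fix A :: "(real^'n) set"
  assume "A \<in> sets borel"
  then have "g j -` A \<inter> space M \<in> (\<Union>i<t. {g i -` A \<inter> space M | A. A \<in> sets borel})"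
    using assms by blast
  then show "g j -` A \<inter> space (gen_sigma M g t) \<in> sets (gen_sigma M g t)"
    unfolding sets_gen_sigma by (simp add: sigma_sets.Basic)
qed simp

lemma integral_le_of_convex_bound:
  fixes X Y Z :: "'a \<Rightarrow> real"
  assumes X: "integrable M X" "integral\<^sup>L M X \<le> B" and Y: "integrable M Y" "integral\<^sup>L M Y \<le> B"
    and [measurable]: "Z \<in> borel_measurable M"
    and b: "0 \<le> b" "b \<le> 1" and Z: "\<And>x. 0 \<le> Z x" "\<And>x. Z x \<le> b * X x + (1 - b) * Y x"
  shows "integrable M Z \<and> integral\<^sup>L M Z \<le> B"
proof
  have XY: "integrable M (\<lambda>x. b * X x + (1 - b) * Y x)"
    using X Y by simp
  show "integrable M Z"
    by (rule integrable_abs_bounded[OF XY]) (use Z in auto)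
  have "integral\<^sup>L M Z \<le> (\<integral>x. b * X x + (1 - b) * Y x \<partial>M)"
    using Z order_trans[OF Z(1) Z(2)] by (intro integral_mono'[OF XY]) auto
  also have "\<dots> = b * integral\<^sup>L M X + (1 - b) * integral\<^sup>L M Y"
    using X Y by simp
  also have "\<dots> \<le> b * B + (1 - b) * B"
    using X Y b by (intro add_mono mult_left_mono) auto
  finally show "integral\<^sup>L M Z \<le> B"
    by (simp add: algebra_simps)
qed

section \<open>The ADOPT iteration\<close>

locale adopt =
  fixes \<alpha> \<beta>1 \<beta>2 \<epsilon> :: real and \<theta>0 :: "real^'D"
  assumes step_nonneg: "0 \<le> \<alpha>"
    and beta1: "0 \<le> \<beta>1" "\<beta>1 < 1" and beta2: "0 \<le> \<beta>2" "\<beta>2 < 1"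
    and eps_pos: "0 < \<epsilon>"
begin

abbreviation theta :: "(nat \<Rightarrow> real^'D) \<Rightarrow> nat \<Rightarrow> real^'D" where
  "theta \<equiv> adopt_theta \<alpha> \<beta>1 \<beta>2 \<epsilon> \<theta>0"

definition sq_avg :: "(nat \<Rightarrow> real^'D) \<Rightarrow> nat \<Rightarrow> real^'D" where
  "sq_avg g t = fst (snd (adopt_state \<alpha> \<beta>1 \<beta>2 \<epsilon> \<theta>0 g t))"

text \<open>Indexing: \<open>momentum g t\<close> is the paper's \<open>m\<^sub>t\<^sub>+\<^sub>1\<close>.\<close>

definition momentum :: "(nat \<Rightarrow> real^'D) \<Rightarrow> nat \<Rightarrow> real^'D" where
  "momentum g t = snd (snd (adopt_state \<alpha> \<beta>1 \<beta>2 \<epsilon> \<theta>0 g t))"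

definition scaled_grad :: "(nat \<Rightarrow> real^'D) \<Rightarrow> nat \<Rightarrow> real^'D" where
  "scaled_grad g t = (\<chi> i. g t $ i / max (sqrt (sq_avg g (t - 1) $ i)) \<epsilon>)"

lemma theta_0 [simp]: "theta g 0 = \<theta>0"
  by (simp add: adopt_theta_def Let_def)

lemma theta_Suc: "theta g (Suc s) = theta g s - \<alpha> *\<^sub>R momentum g s"
  by (simp add: adopt_theta_def momentum_def Let_def split_def)

lemma sq_avg_0: "sq_avg g 0 = (\<chi> i. (g 0 $ i)\<^sup>2)"
  by (simp add: sq_avg_def Let_def power2_eq_square)

lemma sq_avg_Suc: "sq_avg g (Suc s) = (\<chi> i. \<beta>2 * sq_avg g s $ i + (1 - \<beta>2) * (g (Suc s) $ i)\<^sup>2)"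
  by (simp add: sq_avg_def Let_def split_def power2_eq_square)

lemma momentum_0: "momentum g 0 = scaled_grad g 1"
  by (simp add: momentum_def scaled_grad_def sq_avg_def Let_def)

lemma momentum_Suc:
  "momentum g (Suc s) = \<beta>1 *\<^sub>R momentum g s + (1 - \<beta>1) *\<^sub>R scaled_grad g (Suc (Suc s))"
  by (simp add: momentum_def scaled_grad_def sq_avg_def Let_def split_def vec_eq_iff)

lemma adopt_state_cong:
  assumes "\<And>j. j \<le> Suc s \<Longrightarrow> g j = g' j"
  shows "adopt_state \<alpha> \<beta>1 \<beta>2 \<epsilon> \<theta>0 g s = adopt_state \<alpha> \<beta>1 \<beta>2 \<epsilon> \<theta>0 g' s"
  using assms by (induction s) (simp_all add: Let_def split_def)

lemma theta_sq_avg_cong: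
  assumes "\<And>j. j \<le> s \<Longrightarrow> g j = g' j"
  shows "theta g s = theta g' s \<and> sq_avg g s = sq_avg g' s"
proof (cases s)
  case 0
  then show ?thesis
    using assms by (simp add: sq_avg_0)
next
  case (Suc r)
  then have "adopt_state \<alpha> \<beta>1 \<beta>2 \<epsilon> \<theta>0 g r = adopt_state \<alpha> \<beta>1 \<beta>2 \<epsilon> \<theta>0 g' r"
    using assms by (intro adopt_state_cong) auto
  moreover have "g (Suc r) = g' (Suc r)"
    using Suc assms by auto
  ultimately show ?thesis
    using Suc by (simp add: adopt_theta_def sq_avg_def Let_def split_def)
qed

lemma sq_avg_nonneg: "0 \<le> sq_avg g s $ i"
  using beta2 by (induction s) (auto simp: sq_avg_0 sq_avg_Suc)

lemma sum_sq_avg_0: "(\<Sum>i\<in>UNIV. sq_avg g 0 $ i) = (norm (g 0))\<^sup>2"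
  by (simp add: sq_avg_0 norm_sq_vec)

lemma sum_sq_avg_Suc:
  "(\<Sum>i\<in>UNIV. sq_avg g (Suc s) $ i)
     = \<beta>2 * (\<Sum>i\<in>UNIV. sq_avg g s $ i) + (1 - \<beta>2) * (norm (g (Suc s)))\<^sup>2"
  by (simp add: sq_avg_Suc norm_sq_vec sum.distrib sum_distrib_left)

lemma norm_scaled_grad_sq_le: "(norm (scaled_grad g t))\<^sup>2 \<le> (norm (g t))\<^sup>2 / \<epsilon>\<^sup>2"
proof -
  have "(g t $ i / max (sqrt (sq_avg g (t - 1) $ i)) \<epsilon>)\<^sup>2 \<le> (g t $ i)\<^sup>2 / \<epsilon>\<^sup>2" for i
  proof -
    have "\<epsilon>\<^sup>2 \<le> (max (sqrt (sq_avg g (t - 1) $ i)) \<epsilon>)\<^sup>2"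
      using eps_pos by (intro power_mono) auto
    then show ?thesis
      using eps_pos by (simp add: power_divide frac_le)
  qed
  then show ?thesis
    unfolding norm_sq_vec[of "scaled_grad g t"] norm_sq_vec[of "g t"] sum_divide_distrib
    by (simp add: scaled_grad_def sum_mono)
qed

lemma norm_momentum_Suc_sq_le:
  "(norm (momentum g (Suc s)))\<^sup>2
     \<le> \<beta>1 * (norm (momentum g s))\<^sup>2 + (1 - \<beta>1) * (norm (scaled_grad g (Suc (Suc s))))\<^sup>2"
  unfolding momentum_Suc using beta1 by (intro norm_convex_combination_sq_le) auto

lemma inner_scaled_grad:
  "a \<bullet> scaled_grad g (Suc s) = (\<Sum>i\<in>UNIV. a $ i / max (sqrt (sq_avg g s $ i)) \<epsilon> * g (Suc s) $ i)"
  by (simp add: scaled_grad_def inner_vec_def)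

lemma borel_measurable_scaled_grad:
  fixes g :: "nat \<Rightarrow> 'm \<Rightarrow> real^'D"
  assumes [measurable]: "g t \<in> borel_measurable N"
    and [measurable]: "(\<lambda>\<omega>. sq_avg (\<lambda>j. g j \<omega>) (t - 1)) \<in> borel_measurable N"
  shows "(\<lambda>\<omega>. scaled_grad (\<lambda>j. g j \<omega>) t) \<in> borel_measurable N"
  unfolding scaled_grad_def by (rule borel_measurable_vec_lambda) measurable

lemma borel_measurable_adopt_state:
  fixes g :: "nat \<Rightarrow> 'm \<Rightarrow> real^'D"
  assumes "\<And>j. j \<le> Suc s \<Longrightarrow> g j \<in> borel_measurable N"
  shows "(\<lambda>\<omega>. theta (\<lambda>j. g j \<omega>) s) \<in> borel_measurable N
    \<and> (\<lambda>\<omega>. sq_avg (\<lambda>j. g j \<omega>) s) \<in> borel_measurable N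
    \<and> (\<lambda>\<omega>. momentum (\<lambda>j. g j \<omega>) s) \<in> borel_measurable N"
  using assms
proof (induction s)
  case 0
  have [measurable]: "g 0 \<in> borel_measurable N"
    using 0 by auto
  have [measurable]: "(\<lambda>\<omega>. sq_avg (\<lambda>j. g j \<omega>) 0) \<in> borel_measurable N"
    unfolding sq_avg_0 by (rule borel_measurable_vec_lambda) measurable
  have "(\<lambda>\<omega>. scaled_grad (\<lambda>j. g j \<omega>) 1) \<in> borel_measurable N"
    by (rule borel_measurable_scaled_grad) (use 0 in auto)
  then show ?case
    unfolding momentum_0 by simp
next
  case (Suc s)
  then have [measurable]: "(\<lambda>\<omega>. theta (\<lambda>j. g j \<omega>) s) \<in> borel_measurable N"
    "(\<lambda>\<omega>. sq_avg (\<lambda>j. g j \<omega>) s) \<in> borel_measurable N"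
    "(\<lambda>\<omega>. momentum (\<lambda>j. g j \<omega>) s) \<in> borel_measurable N"
    "g (Suc s) \<in> borel_measurable N" "g (Suc (Suc s)) \<in> borel_measurable N"
    by auto
  have [measurable]: "(\<lambda>\<omega>. sq_avg (\<lambda>j. g j \<omega>) (Suc s)) \<in> borel_measurable N"
    unfolding sq_avg_Suc by (rule borel_measurable_vec_lambda) measurable
  have [measurable]: "(\<lambda>\<omega>. scaled_grad (\<lambda>j. g j \<omega>) (Suc (Suc s))) \<in> borel_measurable N"
    by (rule borel_measurable_scaled_grad) simp_all
  show ?case
    unfolding theta_Suc momentum_Suc by measurable
qed

lemma borel_measurable_theta_sq_avg:
  fixes g :: "nat \<Rightarrow> 'm \<Rightarrow> real^'D"
  assumes "\<And>j. j \<le> s \<Longrightarrow> g j \<in> borel_measurable N"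
  shows "(\<lambda>\<omega>. theta (\<lambda>j. g j \<omega>) s) \<in> borel_measurable N"
    "(\<lambda>\<omega>. sq_avg (\<lambda>j. g j \<omega>) s) \<in> borel_measurable N"
proof -
  define g' where "g' j = (if j \<le> s then g j else (\<lambda>_. 0))" for j
  have "g' j \<in> borel_measurable N" for j
    using assms by (simp add: g'_def)
  then have "(\<lambda>\<omega>. theta (\<lambda>j. g' j \<omega>) s) \<in> borel_measurable N
      \<and> (\<lambda>\<omega>. sq_avg (\<lambda>j. g' j \<omega>) s) \<in> borel_measurable N"
    using borel_measurable_adopt_state[of s g' N] by blast
  moreover have "theta (\<lambda>j. g' j \<omega>) s = theta (\<lambda>j. g j \<omega>) s
      \<and> sq_avg (\<lambda>j. g' j \<omega>) s = sq_avg (\<lambda>j. g j \<omega>) s" for \<omega>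
    by (rule theta_sq_avg_cong) (simp add: g'_def)
  ultimately show "(\<lambda>\<omega>. theta (\<lambda>j. g j \<omega>) s) \<in> borel_measurable N"
    "(\<lambda>\<omega>. sq_avg (\<lambda>j. g j \<omega>) s) \<in> borel_measurable N"
    by simp_all
qed

definition momentum_weight :: real where
  "momentum_weight = \<beta>1 / (1 - \<beta>1)"

lemma momentum_weight_nonneg: "0 \<le> momentum_weight"
  using beta1 by (simp add: momentum_weight_def)

text \<open>For \<open>s = 0\<close> the truncated \<open>s - 1\<close> selects \<open>m\<^sub>1 = scaled_grad g 1\<close>, which keeps
  \<open>shadow_Suc\<close> valid at \<open>s = 0\<close>.\<close>

definition shadow :: "(nat \<Rightarrow> real^'D) \<Rightarrow> nat \<Rightarrow> real^'D" where
  "shadow g s = theta g s - (momentum_weight * \<alpha>) *\<^sub>R momentum g (s - 1)"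

lemma shadow_0: "shadow g 0 = \<theta>0 - (momentum_weight * \<alpha>) *\<^sub>R scaled_grad g 1"
  by (simp add: shadow_def momentum_0)

lemma shadow_Suc: "shadow g (Suc s) = shadow g s - \<alpha> *\<^sub>R scaled_grad g (Suc s)"
proof (cases s)
  case 0
  then show ?thesis
    by (simp add: shadow_def theta_Suc momentum_0 algebra_simps)
next
  case (Suc r)
  have coeffs: "((1 + momentum_weight) * \<alpha>) * \<beta>1 = momentum_weight * \<alpha>"
    "((1 + momentum_weight) * \<alpha>) * (1 - \<beta>1) = \<alpha>"
    using beta1 by (simp_all add: momentum_weight_def field_simps)
  have "shadow g (Suc s) = theta g (Suc r) - ((1 + momentum_weight) * \<alpha>) *\<^sub>R momentum g (Suc r)"
    using Suc by (simp add: shadow_def theta_Suc algebra_simps)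
  also have "((1 + momentum_weight) * \<alpha>) *\<^sub>R momentum g (Suc r)
      = (momentum_weight * \<alpha>) *\<^sub>R momentum g r + \<alpha> *\<^sub>R scaled_grad g (Suc (Suc r))"
    unfolding momentum_Suc scaleR_add_right scaleR_scaleR coeffs ..
  finally show ?thesis
    using Suc by (simp add: shadow_def algebra_simps)
qed

end

section \<open>Descent along the shadow iterate\<close>

locale adopt_smooth = adopt \<alpha> \<beta>1 \<beta>2 \<epsilon> \<theta>0
    for \<alpha> \<beta>1 \<beta>2 \<epsilon> :: real and \<theta>0 :: "real^'D" +
  fixes f :: "real^'D \<Rightarrow> real" and df :: "real^'D \<Rightarrow> real^'D" and L :: real
  assumes grad: "\<And>x. GDERIV f x :> df x"
    and smooth: "\<And>x y. norm (df x - df y) \<le> L * norm (x - y)"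
    and L_nonneg: "0 \<le> L"
begin

lemma borel_measurable_df [measurable]: "df \<in> borel_measurable borel"
proof -
  have "L-lipschitz_on UNIV df"
    using L_nonneg smooth by (simp add: lipschitz_on_def dist_norm)
  then show ?thesis
    by (intro borel_measurable_continuous_onI lipschitz_on_continuous_on)
qed

lemma shadow_descent_step:
  "\<alpha> * (df (theta g s) \<bullet> scaled_grad g (Suc s))
     \<le> f (shadow g s) - f (shadow g (Suc s))
       + L * (1 + momentum_weight) * \<alpha>\<^sup>2
         * ((norm (scaled_grad g (Suc s)))\<^sup>2 + (norm (momentum g (s - 1)))\<^sup>2)"
proof -
  define x where "x = scaled_grad g (Suc s)"
  define m where "m = momentum g (s - 1)"
  define c where "c = momentum_weight"
  define S where "S = (norm x)\<^sup>2 + (norm m)\<^sup>2"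
  have c: "0 \<le> c"
    unfolding c_def by (rule momentum_weight_nonneg)
  have descent: "\<alpha> * (df (shadow g s) \<bullet> x) \<le> f (shadow g s) - f (shadow g (Suc s)) + L * \<alpha>\<^sup>2 * (norm x)\<^sup>2"
    using descent_lemma[OF grad smooth L_nonneg, of "shadow g (Suc s)" "shadow g s"]
    by (simp add: shadow_Suc x_def power_mult_distrib)
  have "(df (theta g s) - df (shadow g s)) \<bullet> x \<le> norm (df (theta g s) - df (shadow g s)) * norm x"
    by (rule norm_cauchy_schwarz)
  also have "\<dots> \<le> L * (c * \<alpha> * norm m) * norm x"
    using smooth[of "theta g s" "shadow g s"] c step_nonneg
    by (intro mult_right_mono) (simp_all add: shadow_def m_def c_def)
  also have "\<dots> \<le> L * c * \<alpha> * S"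
  proof -
    have "norm m * norm x \<le> S"
      using mult_le_sum_squares[of "norm m" "norm x"] by (simp add: S_def add.commute)
    then show ?thesis
      using L_nonneg c step_nonneg by (simp add: mult_left_mono mult.assoc)
  qed
  finally have "\<alpha> * ((df (theta g s) - df (shadow g s)) \<bullet> x) \<le> \<alpha> * (L * c * \<alpha> * S)"
    using step_nonneg by (rule mult_left_mono)
  moreover have "L * \<alpha>\<^sup>2 * (norm x)\<^sup>2 \<le> L * \<alpha>\<^sup>2 * S"
    using L_nonneg by (intro mult_left_mono) (simp_all add: S_def)
  moreover have "L * (1 + c) * \<alpha>\<^sup>2 * S = L * \<alpha>\<^sup>2 * S + \<alpha> * (L * c * \<alpha> * S)"
    by (simp add: power2_eq_square algebra_simps)
  moreover have "\<alpha> * (df (theta g s) \<bullet> x)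
      = \<alpha> * (df (shadow g s) \<bullet> x) + \<alpha> * ((df (theta g s) - df (shadow g s)) \<bullet> x)"
    by (simp add: inner_diff_left algebra_simps)
  ultimately show ?thesis
    using descent unfolding x_def[symmetric] m_def[symmetric] c_def[symmetric] S_def[symmetric]
    by linarith
qed

lemma shadow_telescope:
  "\<alpha> * (\<Sum>s<T. df (theta g s) \<bullet> scaled_grad g (Suc s))
     \<le> f (shadow g 0) - f (shadow g T)
       + L * (1 + momentum_weight) * \<alpha>\<^sup>2
         * (\<Sum>s<T. (norm (scaled_grad g (Suc s)))\<^sup>2 + (norm (momentum g (s - 1)))\<^sup>2)"
proof -
  have "\<alpha> * (\<Sum>s<T. df (theta g s) \<bullet> scaled_grad g (Suc s))
      = (\<Sum>s<T. \<alpha> * (df (theta g s) \<bullet> scaled_grad g (Suc s)))"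
    by (simp add: sum_distrib_left)
  also have "\<dots> \<le> (\<Sum>s<T. f (shadow g s) - f (shadow g (Suc s))
      + L * (1 + momentum_weight) * \<alpha>\<^sup>2
        * ((norm (scaled_grad g (Suc s)))\<^sup>2 + (norm (momentum g (s - 1)))\<^sup>2))"
    by (intro sum_mono shadow_descent_step)
  also have "\<dots> = f (shadow g 0) - f (shadow g T)
      + L * (1 + momentum_weight) * \<alpha>\<^sup>2
        * (\<Sum>s<T. (norm (scaled_grad g (Suc s)))\<^sup>2 + (norm (momentum g (s - 1)))\<^sup>2)"
    by (simp only: sum.distrib sum_lessThan_telescope'[of "\<lambda>s. f (shadow g s)"] sum_distrib_left[symmetric])
  finally show ?thesis .
qed

text \<open>The first-order term is bounded with \<open>\<parallel>x\<parallel> \<le> 1 + \<parallel>x\<parallel>\<^sup>2\<close>, so that only second moments of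
  the scaled gradients enter later.\<close>

lemma f_shadow_0_le:
  "f (shadow g 0) \<le> f \<theta>0 + norm (df \<theta>0) * momentum_weight * \<alpha> * (1 + (norm (scaled_grad g 1))\<^sup>2)
     + L * momentum_weight\<^sup>2 * \<alpha>\<^sup>2 * (norm (scaled_grad g 1))\<^sup>2"
proof -
  define x where "x = scaled_grad g 1"
  define c where "c = momentum_weight"
  have c\<alpha>: "0 \<le> c * \<alpha>"
    using momentum_weight_nonneg step_nonneg by (simp add: c_def)
  have "f (shadow g 0) \<le> f \<theta>0 + df \<theta>0 \<bullet> (- (c * \<alpha>) *\<^sub>R x) + L * (norm (- (c * \<alpha>) *\<^sub>R x))\<^sup>2"
    using descent_lemma[OF grad smooth L_nonneg, of "shadow g 0" \<theta>0] by (simp add: shadow_0 x_def c_def)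
  also have "df \<theta>0 \<bullet> (- (c * \<alpha>) *\<^sub>R x) \<le> norm (df \<theta>0) * (c * \<alpha>) * norm x"
    using norm_cauchy_schwarz[of "df \<theta>0" "- (c * \<alpha>) *\<^sub>R x"] c\<alpha> by (simp add: mult.assoc)
  also have "\<dots> \<le> norm (df \<theta>0) * (c * \<alpha>) * (1 + (norm x)\<^sup>2)"
  proof -
    have "norm x \<le> 1 + (norm x)\<^sup>2"
      using mult_le_sum_squares[of 1 "norm x"] by simp
    then show ?thesis
      using c\<alpha> by (simp add: mult_left_mono)
  qed
  also have "(norm (- (c * \<alpha>) *\<^sub>R x))\<^sup>2 = c\<^sup>2 * \<alpha>\<^sup>2 * (norm x)\<^sup>2"
    by (simp add: power_mult_distrib)
  finally show ?thesis
    unfolding x_def c_def by (simp add: mult.assoc)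
qed

lemma descent_sum_le:
  assumes lower: "\<And>x. f_inf \<le> f x"
  shows "\<alpha> * (\<Sum>s<T. df (theta g s) \<bullet> scaled_grad g (Suc s))
    \<le> f \<theta>0 - f_inf + norm (df \<theta>0) * momentum_weight * \<alpha> * (1 + (norm (scaled_grad g 1))\<^sup>2)
      + L * momentum_weight\<^sup>2 * \<alpha>\<^sup>2 * (norm (scaled_grad g 1))\<^sup>2
      + L * (1 + momentum_weight) * \<alpha>\<^sup>2
        * (\<Sum>s<T. (norm (scaled_grad g (Suc s)))\<^sup>2 + (norm (momentum g (s - 1)))\<^sup>2)"
  using shadow_telescope[of g T] f_shadow_0_le[of g] lower[of "shadow g T"] by linarith

definition precond_grad_sq :: "(nat \<Rightarrow> real^'D) \<Rightarrow> nat \<Rightarrow> real" where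
  "precond_grad_sq g s = (\<Sum>i\<in>UNIV. (df (theta g s) $ i)\<^sup>2 / max (sqrt (sq_avg g s $ i)) \<epsilon>)"

lemma precond_grad_sq_nonneg: "0 \<le> precond_grad_sq g s"
  using eps_pos by (auto simp: precond_grad_sq_def intro!: sum_nonneg divide_nonneg_pos)

lemma norm_grad_sq_le_precond:
  "(norm (df (theta g s)))\<^sup>2 \<le> precond_grad_sq g s * sqrt (\<epsilon>\<^sup>2 + (\<Sum>i\<in>UNIV. sq_avg g s $ i))"
  unfolding precond_grad_sq_def using eps_pos sq_avg_nonneg by (rule norm_sq_le_preconditioned)

end

section \<open>Expectations along the stochastic iteration\<close>

locale adopt_stochastic = adopt_smooth \<alpha> \<beta>1 \<beta>2 \<epsilon> \<theta>0 f df L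
    for \<alpha> \<beta>1 \<beta>2 \<epsilon> :: real and \<theta>0 :: "real^'D" and f df and L :: real +
  fixes f_inf G :: real and T :: nat and M :: "'m measure" and g :: "nat \<Rightarrow> 'm \<Rightarrow> real^'D"
  assumes lower: "\<And>x. f_inf \<le> f x"
    and prob_space_M: "prob_space M"
    and g_measurable: "\<And>t. t \<le> T \<Longrightarrow> g t \<in> borel_measurable M"
    and g_second_moment: "\<And>t. t \<le> T \<Longrightarrow> (\<integral>\<^sup>+\<omega>. ennreal ((norm (g t \<omega>))\<^sup>2) \<partial>M) \<le> ennreal (G\<^sup>2)"
    and g_unbiased: "\<And>t i. t \<in> {1..T} \<Longrightarrow> AE \<omega> in M.
      real_cond_exp M (gen_sigma M g t) (\<lambda>\<omega>. g t \<omega> $ i) \<omega> = df (theta (\<lambda>s. g s \<omega>) (t - 1)) $ i"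
begin

sublocale prob_space M
  by (rule prob_space_M)

abbreviation path :: "'m \<Rightarrow> nat \<Rightarrow> real^'D" where
  "path \<omega> \<equiv> (\<lambda>j. g j \<omega>)"

lemma measurable_theta: "s \<le> T \<Longrightarrow> (\<lambda>\<omega>. theta (path \<omega>) s) \<in> borel_measurable M"
  and measurable_sq_avg: "s \<le> T \<Longrightarrow> (\<lambda>\<omega>. sq_avg (path \<omega>) s) \<in> borel_measurable M"
  using borel_measurable_theta_sq_avg[of s g M] g_measurable by auto

lemma measurable_momentum: "s < T \<Longrightarrow> (\<lambda>\<omega>. momentum (path \<omega>) s) \<in> borel_measurable M"
  using borel_measurable_adopt_state[of s g M] g_measurable by auto

lemma measurable_scaled_grad: "t \<le> T \<Longrightarrow> (\<lambda>\<omega>. scaled_grad (path \<omega>) t) \<in> borel_measurable M"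
  by (intro borel_measurable_scaled_grad g_measurable measurable_sq_avg) auto

lemma g_norm_sq:
  assumes "t \<le> T"
  shows "integrable M (\<lambda>\<omega>. (norm (g t \<omega>))\<^sup>2)" and "expectation (\<lambda>\<omega>. (norm (g t \<omega>))\<^sup>2) \<le> G\<^sup>2"
proof -
  have [measurable]: "g t \<in> borel_measurable M"
    using assms by (rule g_measurable)
  show integrable: "integrable M (\<lambda>\<omega>. (norm (g t \<omega>))\<^sup>2)"
    by (rule integrableI_nonneg)
      (use g_second_moment[OF assms] in \<open>auto simp: top.not_eq_extremum intro: le_less_trans\<close>)
  have "ennreal (expectation (\<lambda>\<omega>. (norm (g t \<omega>))\<^sup>2)) \<le> ennreal (G\<^sup>2)"
    using g_second_moment[OF assms] nn_integral_eq_integral[OF integrable] by simp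
  then show "expectation (\<lambda>\<omega>. (norm (g t \<omega>))\<^sup>2) \<le> G\<^sup>2"
    by (simp add: ennreal_le_iff)
qed

lemma scaled_grad_norm_sq:
  assumes "t \<le> T"
  shows "integrable M (\<lambda>\<omega>. (norm (scaled_grad (path \<omega>) t))\<^sup>2)"
    and "expectation (\<lambda>\<omega>. (norm (scaled_grad (path \<omega>) t))\<^sup>2) \<le> G\<^sup>2 / \<epsilon>\<^sup>2"
proof -
  have [measurable]: "(\<lambda>\<omega>. scaled_grad (path \<omega>) t) \<in> borel_measurable M"
    using assms by (rule measurable_scaled_grad)
  have bound: "integrable M (\<lambda>\<omega>. (norm (g t \<omega>))\<^sup>2 / \<epsilon>\<^sup>2)"
    using g_norm_sq(1)[OF assms] by simp
  show "integrable M (\<lambda>\<omega>. (norm (scaled_grad (path \<omega>) t))\<^sup>2)"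
    by (rule integrable_abs_bounded[OF bound]) (auto intro: norm_scaled_grad_sq_le)
  have "expectation (\<lambda>\<omega>. (norm (scaled_grad (path \<omega>) t))\<^sup>2)
      \<le> expectation (\<lambda>\<omega>. (norm (g t \<omega>))\<^sup>2 / \<epsilon>\<^sup>2)"
    by (rule integral_mono'[OF bound]) (auto intro: norm_scaled_grad_sq_le)
  also have "\<dots> \<le> G\<^sup>2 / \<epsilon>\<^sup>2"
    using g_norm_sq(2)[OF assms] by (simp add: divide_right_mono)
  finally show "expectation (\<lambda>\<omega>. (norm (scaled_grad (path \<omega>) t))\<^sup>2) \<le> G\<^sup>2 / \<epsilon>\<^sup>2" .
qed

lemma momentum_norm_sq:
  assumes "s < T"
  shows "integrable M (\<lambda>\<omega>. (norm (momentum (path \<omega>) s))\<^sup>2)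
    \<and> expectation (\<lambda>\<omega>. (norm (momentum (path \<omega>) s))\<^sup>2) \<le> G\<^sup>2 / \<epsilon>\<^sup>2"
  using assms
proof (induction s)
  case 0
  then show ?case
    using scaled_grad_norm_sq[of 1] by (simp add: momentum_0)
next
  case (Suc s)
  show ?case
  proof (rule integral_le_of_convex_bound[where b = \<beta>1
      and X = "\<lambda>\<omega>. (norm (momentum (path \<omega>) s))\<^sup>2"
      and Y = "\<lambda>\<omega>. (norm (scaled_grad (path \<omega>) (Suc (Suc s))))\<^sup>2"])
    show "(\<lambda>\<omega>. (norm (momentum (path \<omega>) (Suc s)))\<^sup>2) \<in> borel_measurable M"
      using measurable_momentum[OF Suc.prems] by measurable
  qed (use Suc scaled_grad_norm_sq[of "Suc (Suc s)"] beta1 norm_momentum_Suc_sq_le in auto)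
qed

lemma sum_sq_avg_moment:
  assumes "s \<le> T"
  shows "integrable M (\<lambda>\<omega>. \<Sum>i\<in>UNIV. sq_avg (path \<omega>) s $ i)
    \<and> expectation (\<lambda>\<omega>. \<Sum>i\<in>UNIV. sq_avg (path \<omega>) s $ i) \<le> G\<^sup>2"
  using assms
proof (induction s)
  case 0
  then show ?case
    using g_norm_sq[of 0] by (simp add: sum_sq_avg_0)
next
  case (Suc s)
  show ?case
  proof (rule integral_le_of_convex_bound[where b = \<beta>2
      and X = "\<lambda>\<omega>. \<Sum>i\<in>UNIV. sq_avg (path \<omega>) s $ i" and Y = "\<lambda>\<omega>. (norm (g (Suc s) \<omega>))\<^sup>2"])
    show "(\<lambda>\<omega>. \<Sum>i\<in>UNIV. sq_avg (path \<omega>) (Suc s) $ i) \<in> borel_measurable M"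
      using measurable_sq_avg[OF Suc.prems] by measurable
  qed (use Suc g_norm_sq[of "Suc s"] beta2 in \<open>auto simp: sum_sq_avg_Suc sq_avg_nonneg sum_nonneg\<close>)
qed

lemma theta_dist_sq_integrable:
  "s \<le> T \<Longrightarrow> integrable M (\<lambda>\<omega>. (norm (theta (path \<omega>) s - \<theta>0))\<^sup>2)"
proof (induction s)
  case 0
  then show ?case
    by simp
next
  case (Suc s)
  have "integrable M (\<lambda>\<omega>. (norm ((- \<alpha>) *\<^sub>R momentum (path \<omega>) s))\<^sup>2)"
    using momentum_norm_sq[of s] Suc.prems by (simp add: power_mult_distrib)
  moreover have "(\<lambda>\<omega>. theta (path \<omega>) (Suc s) - \<theta>0) \<in> borel_measurable M"
    using measurable_theta[OF Suc.prems] by measurable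
  ultimately have "integrable M (\<lambda>\<omega>. (norm ((theta (path \<omega>) s - \<theta>0) + (- \<alpha>) *\<^sub>R momentum (path \<omega>) s))\<^sup>2)"
    using Suc by (intro integrable_norm_sq_add) (simp_all add: theta_Suc algebra_simps)
  then show ?case
    by (simp add: theta_Suc algebra_simps)
qed

lemma grad_norm_sq_integrable:
  assumes "s \<le> T"
  shows "integrable M (\<lambda>\<omega>. (norm (df (theta (path \<omega>) s)))\<^sup>2)"
proof -
  have [measurable]: "(\<lambda>\<omega>. theta (path \<omega>) s) \<in> borel_measurable M"
    using assms by (rule measurable_theta)
  have "integrable M (\<lambda>\<omega>. L\<^sup>2 * (norm (theta (path \<omega>) s - \<theta>0))\<^sup>2)"
    using theta_dist_sq_integrable[OF assms] by simp
  then have "integrable M (\<lambda>\<omega>. (norm (df (theta (path \<omega>) s) - df \<theta>0))\<^sup>2)"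
  proof (rule integrable_abs_bounded)
    fix \<omega>
    have "norm (df (theta (path \<omega>) s) - df \<theta>0) \<le> L * norm (theta (path \<omega>) s - \<theta>0)"
      by (rule smooth)
    then show "\<bar>(norm (df (theta (path \<omega>) s) - df \<theta>0))\<^sup>2\<bar> \<le> L\<^sup>2 * (norm (theta (path \<omega>) s - \<theta>0))\<^sup>2"
      by (simp add: power_mono power_mult_distrib[symmetric])
  qed measurable
  then have "integrable M (\<lambda>\<omega>. (norm (df \<theta>0 + (df (theta (path \<omega>) s) - df \<theta>0)))\<^sup>2)"
    by (intro integrable_norm_sq_add) auto
  then show ?thesis
    by simp
qed

lemma precond_products_integrable:
  assumes "s < T"
  defines "h i \<omega> \<equiv> df (theta (path \<omega>) s) $ i / max (sqrt (sq_avg (path \<omega>) s $ i)) \<epsilon>"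
  shows "integrable M (\<lambda>\<omega>. h i \<omega> * g (Suc s) \<omega> $ i)"
    and "integrable M (\<lambda>\<omega>. h i \<omega> * df (theta (path \<omega>) s) $ i)"
proof -
  have [measurable]: "(\<lambda>\<omega>. theta (path \<omega>) s) \<in> borel_measurable M"
    "(\<lambda>\<omega>. sq_avg (path \<omega>) s) \<in> borel_measurable M" "g (Suc s) \<in> borel_measurable M"
    using assms measurable_theta measurable_sq_avg g_measurable by auto
  have "integrable M (\<lambda>\<omega>. (norm (df (theta (path \<omega>) s)) / \<epsilon>)\<^sup>2 + (norm (g (Suc s) \<omega>))\<^sup>2)"
    using grad_norm_sq_integrable[of s] g_norm_sq(1)[of "Suc s"] assms by (simp add: power_divide)
  then show "integrable M (\<lambda>\<omega>. h i \<omega> * g (Suc s) \<omega> $ i)"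
    unfolding h_def by (rule integrable_abs_bounded) (measurable, rule abs_div_max_mult_le[OF eps_pos])
  have "integrable M (\<lambda>\<omega>. (norm (df (theta (path \<omega>) s)))\<^sup>2 / \<epsilon>)"
    using grad_norm_sq_integrable[of s] assms by simp
  then show "integrable M (\<lambda>\<omega>. h i \<omega> * df (theta (path \<omega>) s) $ i)"
    unfolding h_def by (rule integrable_abs_bounded) (measurable, rule abs_div_max_mult_self_le[OF eps_pos])
qed

text \<open>The denominators of the scaled gradient \<open>g\<^sub>s\<^sub>+\<^sub>1 / max {\<surd>v\<^sub>s, \<epsilon>}\<close> depend only on
  \<open>g\<^sub>0, \<dots>, g\<^sub>s\<close>, so conditioning on them replaces \<open>g\<^sub>s\<^sub>+\<^sub>1\<close> by \<open>\<nabla>f(\<theta>\<^sub>s)\<close>. This is the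
  point of ADOPT's ordering of the updates of \<open>v\<close> and \<open>m\<close>.\<close>

lemma expectation_inner_scaled_grad:
  assumes "s < T"
  shows "integrable M (\<lambda>\<omega>. df (theta (path \<omega>) s) \<bullet> scaled_grad (path \<omega>) (Suc s))"
    and "integrable M (\<lambda>\<omega>. precond_grad_sq (path \<omega>) s)"
    and "expectation (\<lambda>\<omega>. df (theta (path \<omega>) s) \<bullet> scaled_grad (path \<omega>) (Suc s))
      = expectation (\<lambda>\<omega>. precond_grad_sq (path \<omega>) s)"
proof -
  define F where "F = gen_sigma M g (Suc s)"
  define h where "h i \<omega> = df (theta (path \<omega>) s) $ i / max (sqrt (sq_avg (path \<omega>) s $ i)) \<epsilon>" for i \<omega>
  have "finite_measure M"
    using prob_space_M by (simp add: prob_space_def)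
  then have F: "sigma_finite_subalgebra M F"
    unfolding F_def using assms g_measurable
    by (intro finite_measure_subalgebra_is_sigma_finite)
      (simp add: finite_measure_subalgebra_def finite_measure_subalgebra_axioms_def subalgebra_gen_sigma)
  have [measurable]: "(\<lambda>\<omega>. theta (path \<omega>) s) \<in> borel_measurable F"
    "(\<lambda>\<omega>. sq_avg (path \<omega>) s) \<in> borel_measurable F"
    unfolding F_def by (simp_all add: borel_measurable_theta_sq_avg measurable_gen_sigma)
  have [measurable]: "(\<lambda>\<omega>. theta (path \<omega>) s) \<in> borel_measurable M" "g (Suc s) \<in> borel_measurable M"
    using assms measurable_theta g_measurable by auto
  have h_F [measurable]: "h i \<in> borel_measurable F" for i
    unfolding h_def by measurable
  have products: "integrable M (\<lambda>\<omega>. h i \<omega> * g (Suc s) \<omega> $ i)"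
    "integrable M (\<lambda>\<omega>. h i \<omega> * df (theta (path \<omega>) s) $ i)" for i
    using precond_products_integrable[OF assms] by (simp_all add: h_def)
  have "expectation (\<lambda>\<omega>. h i \<omega> * g (Suc s) \<omega> $ i) = expectation (\<lambda>\<omega>. h i \<omega> * df (theta (path \<omega>) s) $ i)"
    for i
    using F products(1) h_F
    by (rule integral_mult_real_cond_exp_eq) (use g_unbiased[of "Suc s" i] assms in \<open>simp_all add: F_def\<close>)
  moreover have "df (theta (path \<omega>) s) \<bullet> scaled_grad (path \<omega>) (Suc s) = (\<Sum>i\<in>UNIV. h i \<omega> * g (Suc s) \<omega> $ i)"
    and "precond_grad_sq (path \<omega>) s = (\<Sum>i\<in>UNIV. h i \<omega> * df (theta (path \<omega>) s) $ i)" for \<omega>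
    by (simp_all add: h_def inner_scaled_grad precond_grad_sq_def power2_eq_square)
  ultimately show "integrable M (\<lambda>\<omega>. df (theta (path \<omega>) s) \<bullet> scaled_grad (path \<omega>) (Suc s))"
    "integrable M (\<lambda>\<omega>. precond_grad_sq (path \<omega>) s)"
    "expectation (\<lambda>\<omega>. df (theta (path \<omega>) s) \<bullet> scaled_grad (path \<omega>) (Suc s))
      = expectation (\<lambda>\<omega>. precond_grad_sq (path \<omega>) s)"
    using products by (simp_all add: integral_sum)
qed

lemma second_moments_sum_le:
  "integrable M (\<lambda>\<omega>. \<Sum>s<T. (norm (scaled_grad (path \<omega>) (Suc s)))\<^sup>2 + (norm (momentum (path \<omega>) (s - 1)))\<^sup>2)
   \<and> expectation (\<lambda>\<omega>. \<Sum>s<T. (norm (scaled_grad (path \<omega>) (Suc s)))\<^sup>2 + (norm (momentum (path \<omega>) (s - 1)))\<^sup>2)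
     \<le> T * (2 * (G\<^sup>2 / \<epsilon>\<^sup>2))"
proof -
  have summands: "integrable M (\<lambda>\<omega>. (norm (scaled_grad (path \<omega>) (Suc s)))\<^sup>2)
      \<and> expectation (\<lambda>\<omega>. (norm (scaled_grad (path \<omega>) (Suc s)))\<^sup>2) \<le> G\<^sup>2 / \<epsilon>\<^sup>2"
    "integrable M (\<lambda>\<omega>. (norm (momentum (path \<omega>) (s - 1)))\<^sup>2)
      \<and> expectation (\<lambda>\<omega>. (norm (momentum (path \<omega>) (s - 1)))\<^sup>2) \<le> G\<^sup>2 / \<epsilon>\<^sup>2" if "s < T" for s
    using scaled_grad_norm_sq[of "Suc s"] momentum_norm_sq[of "s - 1"] that by auto
  have "expectation (\<lambda>\<omega>. \<Sum>s<T. (norm (scaled_grad (path \<omega>) (Suc s)))\<^sup>2 + (norm (momentum (path \<omega>) (s - 1)))\<^sup>2)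
      = (\<Sum>s<T. expectation (\<lambda>\<omega>. (norm (scaled_grad (path \<omega>) (Suc s)))\<^sup>2)
          + expectation (\<lambda>\<omega>. (norm (momentum (path \<omega>) (s - 1)))\<^sup>2))"
    using summands by (simp add: integral_sum)
  also have "\<dots> \<le> (\<Sum>s<T. 2 * (G\<^sup>2 / \<epsilon>\<^sup>2))"
    using summands by (intro sum_mono) fastforce
  finally show ?thesis
    using summands by auto
qed

lemma expected_descent_sum_le:
  assumes "1 \<le> T"
  shows "\<alpha> * (\<Sum>s<T. expectation (\<lambda>\<omega>. precond_grad_sq (path \<omega>) s))
    \<le> f \<theta>0 - f_inf + norm (df \<theta>0) * momentum_weight * (1 + G\<^sup>2 / \<epsilon>\<^sup>2) * \<alpha>
      + L * momentum_weight\<^sup>2 * (G\<^sup>2 / \<epsilon>\<^sup>2) * \<alpha>\<^sup>2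
      + 2 * L * (1 + momentum_weight) * (G\<^sup>2 / \<epsilon>\<^sup>2) * \<alpha>\<^sup>2 * T"
proof -
  define B where "B = G\<^sup>2 / \<epsilon>\<^sup>2"
  define c1 where "c1 = norm (df \<theta>0) * momentum_weight * \<alpha>"
  define c2 where "c2 = L * momentum_weight\<^sup>2 * \<alpha>\<^sup>2"
  define c3 where "c3 = L * (1 + momentum_weight) * \<alpha>\<^sup>2"
  define x1 where "x1 = (\<lambda>\<omega>. (norm (scaled_grad (path \<omega>) 1))\<^sup>2)"
  define S where "S = (\<lambda>\<omega>. \<Sum>s<T. (norm (scaled_grad (path \<omega>) (Suc s)))\<^sup>2 + (norm (momentum (path \<omega>) (s - 1)))\<^sup>2)"
  define D where "D = (\<lambda>\<omega>. \<alpha> * (\<Sum>s<T. df (theta (path \<omega>) s) \<bullet> scaled_grad (path \<omega>) (Suc s)))"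
  define R where "R = (\<lambda>\<omega>. f \<theta>0 - f_inf + c1 * (1 + x1 \<omega>) + c2 * x1 \<omega> + c3 * S \<omega>)"
  have c: "0 \<le> c1" "0 \<le> c2" "0 \<le> c3"
    using momentum_weight_nonneg step_nonneg L_nonneg by (simp_all add: c1_def c2_def c3_def)
  have x1: "integrable M x1" "expectation x1 \<le> B"
    using scaled_grad_norm_sq[of 1] assms by (simp_all add: x1_def B_def)
  have S: "integrable M S" "expectation S \<le> T * (2 * B)"
    using second_moments_sum_le by (simp_all add: S_def B_def)
  have D: "integrable M D" "expectation D = \<alpha> * (\<Sum>s<T. expectation (\<lambda>\<omega>. precond_grad_sq (path \<omega>) s))"
    using expectation_inner_scaled_grad by (auto simp: D_def integral_sum)
  have "expectation D \<le> expectation R"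
    using x1 S lower descent_sum_le
    by (intro integral_mono D) (simp_all add: R_def D_def c1_def c2_def c3_def x1_def S_def)
  also have "\<dots> = f \<theta>0 - f_inf + c1 * (1 + expectation x1) + c2 * expectation x1 + c3 * expectation S"
    using x1 S by (simp add: R_def prob_space)
  also have "\<dots> \<le> f \<theta>0 - f_inf + c1 * (1 + B) + c2 * B + c3 * (T * (2 * B))"
    using c x1 S by (intro add_mono mult_left_mono order_refl) auto
  also have "\<dots> = f \<theta>0 - f_inf + norm (df \<theta>0) * momentum_weight * (1 + B) * \<alpha>
      + L * momentum_weight\<^sup>2 * B * \<alpha>\<^sup>2 + 2 * L * (1 + momentum_weight) * B * \<alpha>\<^sup>2 * T"
    by (simp add: c1_def c2_def c3_def algebra_simps)
  finally show ?thesis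
    unfolding D B_def .
qed

lemma expected_grad_powr_le:
  assumes "s < T" "0 < \<sigma>"
  shows "expectation (\<lambda>\<omega>. norm (df (theta (path \<omega>) s)) powr (4/3))
    \<le> expectation (\<lambda>\<omega>. precond_grad_sq (path \<omega>) s) / \<sigma> + \<sigma>\<^sup>2 * (\<epsilon>\<^sup>2 + G\<^sup>2)"
proof -
  define Q where "Q = (\<lambda>\<omega>. precond_grad_sq (path \<omega>) s)"
  define V where "V = (\<lambda>\<omega>. \<Sum>i\<in>UNIV. sq_avg (path \<omega>) s $ i)"
  define R where "R = (\<lambda>\<omega>. Q \<omega> / \<sigma> + \<sigma>\<^sup>2 * (\<epsilon>\<^sup>2 + V \<omega>))"
  have V_nonneg: "0 \<le> V \<omega>" for \<omega>
    by (simp add: V_def sq_avg_nonneg sum_nonneg)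
  have Q: "integrable M Q"
    using expectation_inner_scaled_grad(2)[OF assms(1)] by (simp add: Q_def)
  have V: "integrable M V" "expectation V \<le> G\<^sup>2"
    using sum_sq_avg_moment[of s] assms by (simp_all add: V_def)
  have "norm (df (theta (path \<omega>) s)) powr (4/3) \<le> R \<omega>" for \<omega>
  proof -
    have "norm (df (theta (path \<omega>) s)) powr (4/3) \<le> Q \<omega> / \<sigma> + \<sigma>\<^sup>2 * (sqrt (\<epsilon>\<^sup>2 + V \<omega>))\<^sup>2"
      using norm_grad_sq_le_precond precond_grad_sq_nonneg V_nonneg assms(2)
      by (intro powr_four_thirds_le) (simp_all add: Q_def V_def)
    then show ?thesis
      using V_nonneg[of \<omega>] by (simp add: R_def)
  qed
  moreover have "0 \<le> R \<omega>" for \<omega>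
    using precond_grad_sq_nonneg V_nonneg assms(2) by (simp add: R_def Q_def)
  ultimately have "expectation (\<lambda>\<omega>. norm (df (theta (path \<omega>) s)) powr (4/3)) \<le> expectation R"
    using Q V by (intro integral_mono') (simp_all add: R_def)
  also have "\<dots> = expectation Q / \<sigma> + \<sigma>\<^sup>2 * (\<epsilon>\<^sup>2 + expectation V)"
    using Q V by (simp add: R_def prob_space)
  also have "\<dots> \<le> expectation Q / \<sigma> + \<sigma>\<^sup>2 * (\<epsilon>\<^sup>2 + G\<^sup>2)"
    using V by (intro add_mono mult_left_mono) auto
  finally show ?thesis
    by (simp add: Q_def)
qed

definition descent_constant :: "real \<Rightarrow> real \<Rightarrow> real" where
  "descent_constant a1 a2 = (f \<theta>0 - f_inf) / a1 + norm (df \<theta>0) * momentum_weight * (1 + G\<^sup>2 / \<epsilon>\<^sup>2)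
    + L * momentum_weight\<^sup>2 * (G\<^sup>2 / \<epsilon>\<^sup>2) * a2 + 2 * L * (1 + momentum_weight) * (G\<^sup>2 / \<epsilon>\<^sup>2) * a2"

lemma descent_constant_nonneg: "0 < a1 \<Longrightarrow> 0 \<le> a2 \<Longrightarrow> 0 \<le> descent_constant a1 a2"
  using lower[of \<theta>0] momentum_weight_nonneg L_nonneg
  by (simp add: descent_constant_def)

lemma sum_expected_precond_grad_le:
  assumes "1 \<le> T" "0 < a1" "a1 / sqrt T \<le> \<alpha>" "\<alpha> \<le> a2 / sqrt T"
  shows "(\<Sum>s<T. expectation (\<lambda>\<omega>. precond_grad_sq (path \<omega>) s)) \<le> descent_constant a1 a2 * sqrt T"
  unfolding descent_constant_def
  by (rule sum_le_sqrt_of_step_size[OF assms _ _ _ _ expected_descent_sum_le[OF assms(1)]])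
    (use lower[of \<theta>0] momentum_weight_nonneg L_nonneg in auto)

lemma min_expected_grad_powr_le:
  assumes T: "1 \<le> T" and a1: "0 < a1" "a1 / sqrt T \<le> \<alpha>" and a2: "\<alpha> \<le> a2 / sqrt T"
  shows "(MIN t\<in>{1..T}. expectation (\<lambda>\<omega>. norm (df (theta (path \<omega>) (t - 1))) powr (4/3)) powr (3/2))
    \<le> (descent_constant a1 a2 + (\<epsilon>\<^sup>2 + G\<^sup>2)) powr (3/2) / sqrt T"
proof -
  have "0 < a1 / sqrt T"
    using a1 T by simp
  then have "0 < a2 / sqrt T"
    using a1 a2 by linarith
  then have "0 \<le> a2"
    by (simp add: zero_less_divide_iff)
  define q where "q s = expectation (\<lambda>\<omega>. precond_grad_sq (path \<omega>) s)" for s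
  define y where "y s = expectation (\<lambda>\<omega>. norm (df (theta (path \<omega>) s)) powr (4/3))" for s
  obtain s where s: "s < T" "\<And>t. t < T \<Longrightarrow> q s \<le> q t"
    using ex_is_arg_min_if_finite[of "{..<T}" q] T by (auto simp: is_arg_min_linorder)
  have "sqrt T * (sqrt T * q s) = real T * q s"
    by (simp add: mult.assoc[symmetric])
  also have "\<dots> \<le> (\<Sum>t<T. q t)"
    using sum_bounded_below[of "{..<T}" "q s" q] s by simp
  also have "\<dots> \<le> sqrt T * descent_constant a1 a2"
    using sum_expected_precond_grad_le[OF assms] by (simp add: q_def mult.commute)
  finally have "sqrt T * q s \<le> descent_constant a1 a2"
    by (rule mult_left_le_imp_le) (use T in simp)
  then have "q s \<le> descent_constant a1 a2 / sqrt T"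
    using T by (simp add: pos_le_divide_eq mult.commute)
  have "y s powr (3/2) \<le> (descent_constant a1 a2 + (\<epsilon>\<^sup>2 + G\<^sup>2)) powr (3/2) / sqrt T"
  proof (rule powr_three_halves_rate[OF T])
    show "0 \<le> y s"
      unfolding y_def by (rule integral_nonneg_AE) simp
    show "0 \<le> descent_constant a1 a2"
      using a1(1) \<open>0 \<le> a2\<close> by (rule descent_constant_nonneg)
    show "y s \<le> q s / \<sigma> + \<sigma>\<^sup>2 * (\<epsilon>\<^sup>2 + G\<^sup>2)" if "0 < \<sigma>" for \<sigma>
      unfolding y_def q_def using s(1) that by (rule expected_grad_powr_le)
  qed (simp_all add: \<open>q s \<le> descent_constant a1 a2 / sqrt T\<close>)
  moreover have "(MIN t\<in>{1..T}. y (t - 1) powr (3/2)) \<le> y s powr (3/2)"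
    using s(1) by (intro Min_le finite_imageI) (auto intro!: rev_image_eqI[of "Suc s"])
  ultimately show ?thesis
    by (simp add: y_def)
qed

end

theorem theorem4p1:
  fixes f :: "real^'D \<Rightarrow> real" and df :: "real^'D \<Rightarrow> real^'D"
    and f_inf L \<beta>1 \<beta>2 \<epsilon> a1 a2 G :: real and \<theta>0 :: "real^'D"
  assumes grad: "\<And>x. GDERIV f x :> df x"
    and lower: "\<And>x. f x \<ge> f_inf"
    and Lpos: "L > 0"
    and smooth: "\<And>x y. norm (df x - df y) \<le> L * norm (x - y)"
    and b1: "0 \<le> \<beta>1" "\<beta>1 < 1" and b2: "0 \<le> \<beta>2" "\<beta>2 < 1"
    and eps: "\<epsilon> > 0"
    and a: "0 < a1" "a1 \<le> a2"
    and Gpos: "G > 0"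
  shows "\<exists>K. \<forall>(T::nat) (\<alpha>::real) (M::'m measure) (g :: nat \<Rightarrow> 'm \<Rightarrow> real^'D).
           T \<ge> 1 \<longrightarrow> a1 / sqrt T \<le> \<alpha> \<longrightarrow> \<alpha> \<le> a2 / sqrt T \<longrightarrow>
           prob_space M \<longrightarrow>
           (\<forall>t\<le>T. g t \<in> borel_measurable M) \<longrightarrow>
           (\<forall>t\<le>T. (\<integral>\<^sup>+ \<omega>. ennreal ((norm (g t \<omega>))\<^sup>2) \<partial>M) \<le> ennreal (G\<^sup>2)) \<longrightarrow>
           (\<forall>t\<in>{1..T}. \<forall>i. AE \<omega> in M.
               real_cond_exp M (gen_sigma M g t) (\<lambda>\<omega>. g t \<omega> $ i) \<omega>
                 = df (adopt_theta \<alpha> \<beta>1 \<beta>2 \<epsilon> \<theta>0 (\<lambda>s. g s \<omega>) (t - 1)) $ i) \<longrightarrow>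
           (MIN t\<in>{1..T}. (\<integral>\<omega>. (norm (df (adopt_theta \<alpha> \<beta>1 \<beta>2 \<epsilon> \<theta>0 (\<lambda>s. g s \<omega>) (t - 1)))) powr (4/3) \<partial>M) powr (3/2))
             \<le> K / sqrt T"
proof -
  define K where "K = (adopt_stochastic.descent_constant \<beta>1 \<epsilon> \<theta>0 f df L f_inf G a1 a2 + (\<epsilon>\<^sup>2 + G\<^sup>2)) powr (3/2)"
  show ?thesis
  proof (intro exI[of _ K] allI impI)
    fix T :: nat and \<alpha> :: real and M :: "'m measure" and g :: "nat \<Rightarrow> 'm \<Rightarrow> real^'D"
    assume T: "T \<ge> 1" and \<alpha>: "a1 / sqrt T \<le> \<alpha>" "\<alpha> \<le> a2 / sqrt T" and prob: "prob_space M"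
      and measurable: "\<forall>t\<le>T. g t \<in> borel_measurable M"
      and moments: "\<forall>t\<le>T. (\<integral>\<^sup>+ \<omega>. ennreal ((norm (g t \<omega>))\<^sup>2) \<partial>M) \<le> ennreal (G\<^sup>2)"
      and unbiased: "\<forall>t\<in>{1..T}. \<forall>i. AE \<omega> in M.
        real_cond_exp M (gen_sigma M g t) (\<lambda>\<omega>. g t \<omega> $ i) \<omega>
          = df (adopt_theta \<alpha> \<beta>1 \<beta>2 \<epsilon> \<theta>0 (\<lambda>s. g s \<omega>) (t - 1)) $ i"
    have "0 \<le> a1 / sqrt T"
      using a(1) by simp
    then have "0 \<le> \<alpha>"
      using \<alpha>(1) by linarith
    then interpret adopt_stochastic \<alpha> \<beta>1 \<beta>2 \<epsilon> \<theta>0 f df L f_inf G T M g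
      using b1 b2 eps grad smooth less_imp_le[OF Lpos] lower prob measurable moments unbiased
      by (intro adopt_stochastic.intro adopt_smooth.intro adopt.intro adopt_smooth_axioms.intro
          adopt_stochastic_axioms.intro) blast+
    show "(MIN t\<in>{1..T}. (\<integral>\<omega>. (norm (df (adopt_theta \<alpha> \<beta>1 \<beta>2 \<epsilon> \<theta>0 (\<lambda>s. g s \<omega>) (t - 1))))
        powr (4/3) \<partial>M) powr (3/2)) \<le> K / sqrt T"
      unfolding K_def using min_expected_grad_powr_le[OF T a(1) \<alpha>] .
  qed
qed

end
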